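(* Let $X$ be a real topological vector space such that either (1) $X$ is separable and completely metrizable, or (2) $X=Y^*$ where $Y$ is a separable normed space and $X$ carries the weak* topology. If $C\subseteq X$ is nonempty and CS-closed, then $\operatorname{fri} C\neq\emptyset$.
   Context: A subset $C$ of a topological vector space is CS-closed (convergent-series closed) if whenever $x_i\in C$, $\lambda_i\ge0$ ($i\in\mathbb N$), $\sum_i\lambda_i=1$ and the series $\sum_i\lambda_i x_i$ converges in $X$, its sum belongs to $C$. For a convex set $C$, a convex subset $F\subseteq C$ is a face of $C$ if for every $x\in F$ and all $y,z\in C$ with $x\in(y,z)=\{(1-t)y+tz:t\in(0,1)\}$ we have $y,z\in F$; $F_{\min}(x,C)$ is the intersection of all faces of $C$ containing $x\in C$. The face relative interior is $\operatorname{fri} C=\{x\in C: C\subseteq\overline{F_{\min}(x,C)}\}$. *)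

theory Defs
  imports "HOL-Analysis.Analysis"
begin

definition tvs :: "'a::real_vector topology \<Rightarrow> bool" where
  "tvs T \<longleftrightarrow> topspace T = UNIV
     \<and> continuous_map (prod_topology T T) T (\<lambda>(x, y). x + y)
     \<and> continuous_map (prod_topology euclideanreal T) T (\<lambda>(a, x). a *\<^sub>R x)"

definition cs_closed :: "'a::real_vector topology \<Rightarrow> 'a set \<Rightarrow> bool" where
  "cs_closed T C \<longleftrightarrow>
     (\<forall>(x :: nat \<Rightarrow> 'a) (l :: nat \<Rightarrow> real) s.
        (\<forall>i. x i \<in> C) \<and> (\<forall>i. 0 \<le> l i) \<and> l sums 1 \<and>
        limitin T (\<lambda>n. \<Sum>i<n. l i *\<^sub>R x i) s sequentially \<longrightarrow> s \<in> C)"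

definition F_min :: "'a::real_vector \<Rightarrow> 'a set \<Rightarrow> 'a set" where
  "F_min x C = \<Inter>{F. F face_of C \<and> x \<in> F}"

definition fri :: "'a::real_vector topology \<Rightarrow> 'a set \<Rightarrow> 'a set" where
  "fri T C = {x \<in> C. C \<subseteq> T closure_of (F_min x C)}"

definition weak_star :: "('y::real_normed_vector \<Rightarrow>\<^sub>L real) topology" where
  "weak_star = pullback_topology UNIV blinfun_apply (product_topology (\<lambda>_. euclideanreal) UNIV)"

end

theory Submission
  imports Defs
begin

text \<open>Let \<open>c\<^sub>0, c\<^sub>1, \<dots>\<close> be dense in \<open>C\<close> and let \<open>l\<^sub>i > 0\<close> be weights with \<open>\<Sum> l\<^sub>i = 1\<close> for
  which \<open>x = \<Sum> l\<^sub>i c\<^sub>i\<close> converges; then \<open>x \<in> C\<close> by CS-closedness. Dropping the \<open>n\<close>-th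
  term and renormalising gives another admissible series, whose sum \<open>y \<in> C\<close> satisfies
  \<open>x = (1 - l\<^sub>n) y + l\<^sub>n c\<^sub>n\<close>. So every face of \<open>C\<close> through \<open>x\<close> contains all \<open>c\<^sub>n\<close>, whence
  \<open>C \<subseteq> closure (F_min x C)\<close> and \<open>x \<in> fri C\<close>.

  In a separable completely metrizable
  vector space the weights are chosen one at a time so small that the partial sums form a
  Cauchy sequence. In the dual of a separable normed space \<open>l\<^sub>i \<sim> 2\<^sup>-\<^sup>i / (1 + \<parallel>c\<^sub>i\<parallel>)\<close> makes the
  series norm convergent, hence weak* convergent; and on norm-bounded sets the weak* topology
  is that of pointwise convergence on a countable dense subset of the predual, which makes
  every set of functionals weak* separable.\<close>

section \<open>Faces through the sum of a positive series\<close>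

lemma endpoint_mem_F_min:
  assumes "x = (1 - t) *\<^sub>R y + t *\<^sub>R z" "0 < t" "t < 1" "y \<in> C" "z \<in> C"
  shows "z \<in> F_min x C"
  unfolding F_min_def
proof (intro InterI, clarify)
  fix F assume F: "F face_of C" "x \<in> F"
  show "z \<in> F"
  proof (cases "y = z")
    case True
    then show ?thesis using F assms(1) by (simp add: algebra_simps)
  next
    case False
    then have "x \<in> open_segment y z"
      using assms(1-3) unfolding in_segment by blast
    then show ?thesis using face_ofD[OF F(1) _ assms(4,5) F(2)] by blast
  qed
qed

lemma sums_one_imp_less_one:
  fixes l :: "nat \<Rightarrow> real"
  assumes "\<And>i. 0 < l i" "l sums 1"
  shows "l n < 1"
proof -
  have "sum l {n, Suc n} \<le> suminf l"
    by (rule sum_le_suminf) (use assms less_imp_le in \<open>auto simp: sums_iff\<close>)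
  then show ?thesis using assms(1)[of "Suc n"] assms(2) by (auto simp: sums_iff)
qed

lemma cs_closed_drop_term:
  fixes T :: "'a::real_vector topology"
  assumes cs: "cs_closed T C" and aff: "\<And>a b. continuous_map T T (\<lambda>y. a *\<^sub>R y + b)"
    and cC: "\<And>i. c i \<in> C" and lpos: "\<And>i. 0 < l i" and lsum: "l sums 1"
    and lim: "limitin T (\<lambda>n. \<Sum>i<n. l i *\<^sub>R c i) x sequentially"
  shows "(1 / (1 - l n)) *\<^sub>R (x - l n *\<^sub>R c n) \<in> C"
proof -
  define a where "a = 1 / (1 - l n)"
  define l' where "l' i = (if i = n then 0 else a * l i)" for i
  have a: "a * (1 - l n) = 1" "0 < a"
    using sums_one_imp_less_one[OF lpos lsum, of n] by (simp_all add: a_def)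
  have "(\<lambda>i. a * (l i - (if i = n then l i else 0))) sums (a * (1 - l n))"
    by (intro sums_mult sums_diff lsum sums_single)
  moreover have "(\<lambda>i. a * (l i - (if i = n then l i else 0))) = l'"
    by (auto simp: l'_def)
  ultimately have l'sum: "l' sums 1" using a by simp
  have l'nn: "0 \<le> l' i" for i
    using lpos[of i] a by (simp add: l'_def)
  have partial: "(\<Sum>i<N. l' i *\<^sub>R c i) = a *\<^sub>R ((\<Sum>i<N. l i *\<^sub>R c i) - l n *\<^sub>R c n)"
    if "n < N" for N
  proof -
    have "n \<in> {..<N}" using that by simp
    then have "(\<Sum>i<N. l i *\<^sub>R c i) - l n *\<^sub>R c n = (\<Sum>i\<in>{..<N}-{n}. l i *\<^sub>R c i)"
      by (simp add: sum.remove)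
    moreover have "(\<Sum>i<N. l' i *\<^sub>R c i) = (\<Sum>i\<in>{..<N}-{n}. a *\<^sub>R (l i *\<^sub>R c i))"
      using \<open>n \<in> {..<N}\<close> by (simp add: sum.remove l'_def)
    ultimately show ?thesis by (simp add: scaleR_sum_right)
  qed
  have "limitin T ((\<lambda>y. a *\<^sub>R y + (- a * l n) *\<^sub>R c n) \<circ> (\<lambda>n. \<Sum>i<n. l i *\<^sub>R c i))
      (a *\<^sub>R x + (- a * l n) *\<^sub>R c n) sequentially"
    by (rule continuous_map_limit[OF aff lim])
  then have "limitin T (\<lambda>N. \<Sum>i<N. l' i *\<^sub>R c i) (a *\<^sub>R x + (- a * l n) *\<^sub>R c n) sequentially"
    by (rule limitin_transform_eventually[rotated])
      (use partial in \<open>auto simp: eventually_sequentially algebra_simps intro!: exI[of _ "Suc n"]\<close>)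
  then have "a *\<^sub>R x + (- a * l n) *\<^sub>R c n \<in> C"
    using cs l'nn l'sum cC unfolding cs_closed_def by blast
  moreover have "a *\<^sub>R x + (- a * l n) *\<^sub>R c n = a *\<^sub>R (x - l n *\<^sub>R c n)"
    by (simp add: algebra_simps)
  ultimately show ?thesis by (simp add: a_def)
qed

lemma series_term_mem_F_min:
  fixes T :: "'a::real_vector topology"
  assumes cs: "cs_closed T C" and aff: "\<And>a b. continuous_map T T (\<lambda>y. a *\<^sub>R y + b)"
    and cC: "\<And>i. c i \<in> C" and lpos: "\<And>i. 0 < l i" and lsum: "l sums 1"
    and lim: "limitin T (\<lambda>n. \<Sum>i<n. l i *\<^sub>R c i) x sequentially"
  shows "c n \<in> F_min x C"
proof -
  define y where "y = (1 / (1 - l n)) *\<^sub>R (x - l n *\<^sub>R c n)"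
  have lt1: "l n < 1" by (rule sums_one_imp_less_one[OF lpos lsum])
  have "x = (1 - l n) *\<^sub>R y + l n *\<^sub>R c n"
    using lt1 by (simp add: y_def)
  moreover have "y \<in> C"
    unfolding y_def by (rule cs_closed_drop_term[OF cs aff cC lpos lsum lim])
  ultimately show ?thesis
    using endpoint_mem_F_min lpos[of n] lt1 cC by blast
qed

definition has_convergent_positive_series :: "'a::real_vector topology \<Rightarrow> bool" where
  "has_convergent_positive_series T \<longleftrightarrow>
     (\<forall>c :: nat \<Rightarrow> 'a. \<exists>\<mu> x. (\<forall>i. 0 < \<mu> i) \<and> summable \<mu> \<and>
        limitin T (\<lambda>n. \<Sum>i<n. \<mu> i *\<^sub>R c i) x sequentially)"

lemma fri_nonempty_if_countable_dense:
  fixes T :: "'a::real_vector topology"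
  assumes cs: "cs_closed T C" and aff: "\<And>a b. continuous_map T T (\<lambda>y. a *\<^sub>R y + b)"
    and series: "has_convergent_positive_series T"
    and "C \<noteq> {}" and D: "countable D" "D \<subseteq> C" "C \<subseteq> T closure_of D"
  shows "fri T C \<noteq> {}"
proof -
  have "D \<noteq> {}" using \<open>C \<noteq> {}\<close> D(3) by auto
  define c where "c = from_nat_into D"
  have rc: "range c = D" using D(1) \<open>D \<noteq> {}\<close> by (simp add: c_def)
  obtain \<mu> x where \<mu>: "\<And>i. 0 < \<mu> i" "summable \<mu>"
    and lim\<mu>: "limitin T (\<lambda>n. \<Sum>i<n. \<mu> i *\<^sub>R c i) x sequentially"
    using series unfolding has_convergent_positive_series_def by blast
  define s where "s = suminf \<mu>"
  have "s > 0" unfolding s_def by (rule suminf_pos[OF \<mu>(2,1)])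
  define l where "l i = \<mu> i / s" for i
  have lpos: "0 < l i" for i using \<mu> \<open>s > 0\<close> by (simp add: l_def)
  have lsum: "l sums 1"
    unfolding l_def using sums_divide[OF summable_sums[OF \<mu>(2)], of s] \<open>s > 0\<close> by (simp add: s_def)
  have "limitin T ((\<lambda>y. (1/s) *\<^sub>R y + 0) \<circ> (\<lambda>n. \<Sum>i<n. \<mu> i *\<^sub>R c i)) ((1/s) *\<^sub>R x + 0) sequentially"
    by (rule continuous_map_limit[OF aff lim\<mu>])
  then have lim: "limitin T (\<lambda>n. \<Sum>i<n. l i *\<^sub>R c i) ((1/s) *\<^sub>R x) sequentially"
    by (simp add: o_def l_def scaleR_sum_right)
  have cC: "c i \<in> C" for i using rc D(2) by blast
  have "(1/s) *\<^sub>R x \<in> C"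
    using cs cC lpos lsum lim unfolding cs_closed_def by (meson less_imp_le)
  moreover have "C \<subseteq> T closure_of F_min ((1/s) *\<^sub>R x) C"
    using D(3) rc closure_of_mono series_term_mem_F_min[OF cs aff cC lpos lsum lim]
    by (metis image_subset_iff subset_trans)
  ultimately show ?thesis unfolding fri_def by blast
qed

section \<open>Separable completely metrizable vector spaces\<close>

lemma tvs_continuous_map_add:
  assumes "tvs T" "continuous_map X T f" "continuous_map X T g"
  shows "continuous_map X T (\<lambda>x. f x + g x)"
proof -
  have "continuous_map X T ((\<lambda>(x, y). x + y) \<circ> (\<lambda>x. (f x, g x)))"
    by (rule continuous_map_compose[OF continuous_map_pairedI[OF assms(2,3)]])
      (use assms(1) in \<open>simp add: tvs_def\<close>)
  then show ?thesis by (simp add: o_def)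
qed

lemma tvs_continuous_map_scaleR:
  assumes "tvs T" "continuous_map X euclideanreal f" "continuous_map X T g"
  shows "continuous_map X T (\<lambda>x. f x *\<^sub>R g x)"
proof -
  have "continuous_map X T ((\<lambda>(a, x). a *\<^sub>R x) \<circ> (\<lambda>x. (f x, g x)))"
    by (rule continuous_map_compose[OF continuous_map_pairedI[OF assms(2,3)]])
      (use assms(1) in \<open>simp add: tvs_def\<close>)
  then show ?thesis by (simp add: o_def)
qed

lemma tvs_continuous_affine:
  assumes "tvs T"
  shows "continuous_map T T (\<lambda>y. a *\<^sub>R y + b)"
  using assms by (intro tvs_continuous_map_add tvs_continuous_map_scaleR) (auto simp: tvs_def)

lemma tvs_continuous_line:
  assumes "tvs T"
  shows "continuous_map euclideanreal T (\<lambda>t. a + t *\<^sub>R v)"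
  using assms by (intro tvs_continuous_map_add tvs_continuous_map_scaleR) (auto simp: tvs_def)

lemma (in Metric_space) MCauchy_if_summable_steps:
  assumes "range \<sigma> \<subseteq> M" and step: "\<And>n. d (\<sigma> n) (\<sigma> (Suc n)) \<le> b n" and "summable b"
  shows "MCauchy \<sigma>"
proof -
  have \<sigma>M: "\<sigma> n \<in> M" for n using assms(1) by blast
  have chain: "d (\<sigma> m) (\<sigma> n) \<le> sum b {m..<n}" if "m \<le> n" for m n
    using that
  proof (induction n rule: dec_induct)
    case (step n)
    have "d (\<sigma> m) (\<sigma> (Suc n)) \<le> d (\<sigma> m) (\<sigma> n) + d (\<sigma> n) (\<sigma> (Suc n))"
      using triangle \<sigma>M by blast
    also have "\<dots> \<le> sum b {m..<Suc n}" using step.IH step.hyps assms(2)[of n] by simp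
    finally show ?case .
  qed (simp add: \<sigma>M)
  show ?thesis
    unfolding MCauchy_def
  proof (intro conjI allI impI)
    fix \<epsilon> :: real assume "\<epsilon> > 0"
    then obtain N where N: "\<And>m n. N \<le> m \<Longrightarrow> norm (sum b {m..<n}) < \<epsilon>"
      using \<open>summable b\<close> unfolding summable_Cauchy by meson
    have close: "d (\<sigma> m) (\<sigma> n) < \<epsilon>" if "N \<le> m" "m \<le> n" for m n
      using chain[OF that(2)] N[OF that(1), of n] by simp
    show "\<exists>N. \<forall>n n'. N \<le> n \<longrightarrow> N \<le> n' \<longrightarrow> d (\<sigma> n) (\<sigma> n') < \<epsilon>"
    proof (intro exI allI impI)
      fix n n' assume "N \<le> n" "N \<le> n'"
      show "d (\<sigma> n) (\<sigma> n') < \<epsilon>"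
      proof (cases "n \<le> n'")
        case True
        then show ?thesis using close \<open>N \<le> n\<close> by blast
      next
        case False
        then show ?thesis using close[of n' n] \<open>N \<le> n'\<close> commute by simp
      qed
    qed
  qed (use assms(1) in auto)
qed

lemma tvs_metric_small_multiple:
  fixes d :: "'a::real_vector \<Rightarrow> 'a \<Rightarrow> real"
  assumes "Metric_space UNIV d" "tvs (Metric_space.mtopology UNIV d)" "\<epsilon> > 0" "\<delta> > 0"
  obtains t where "0 < t" "t \<le> \<delta>" "d a (a + t *\<^sub>R v) < \<epsilon>"
proof -
  interpret Metric_space UNIV d by (rule assms(1))
  have "openin euclideanreal {t \<in> topspace euclideanreal. a + t *\<^sub>R v \<in> mball a \<epsilon>}"
    by (rule openin_continuous_map_preimage[OF tvs_continuous_line[OF assms(2)]]) simp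
  then have "open {t. a + t *\<^sub>R v \<in> mball a \<epsilon>}" by simp
  moreover have "0 \<in> {t. a + t *\<^sub>R v \<in> mball a \<epsilon>}"
    using assms(3) by simp
  ultimately obtain r where r: "r > 0" "ball 0 r \<subseteq> {t. a + t *\<^sub>R v \<in> mball a \<epsilon>}"
    using open_contains_ball by blast
  show ?thesis
  proof
    show "0 < min (r/2) \<delta>" "min (r/2) \<delta> \<le> \<delta>" using r assms(4) by auto
    have "min (r/2) \<delta> \<in> ball 0 r" using r assms(4) by auto
    then show "d a (a + min (r/2) \<delta> *\<^sub>R v) < \<epsilon>" using r by auto
  qed
qed

lemma completely_metrizable_tvs_has_convergent_positive_series:
  fixes T :: "'a::real_vector topology"
  assumes tv: "tvs T" and cm: "completely_metrizable_space T"
  shows "has_convergent_positive_series T"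
  unfolding has_convergent_positive_series_def
proof
  fix c :: "nat \<Rightarrow> 'a"
  obtain M d where ms: "Metric_space M d" and mc: "Metric_space.mcomplete M d"
    and Teq: "T = Metric_space.mtopology M d"
    using cm unfolding completely_metrizable_space_def by blast
  interpret Metric_space M d by (rule ms)
  have MU: "M = UNIV" using tv Teq by (simp add: tvs_def)
  have ex: "\<exists>t. 0 < t \<and> t \<le> (1/2)^k \<and> d S (S + t *\<^sub>R c k) < (1/2)^k" for S k
    using tvs_metric_small_multiple[of d "(1/2)^k" "(1/2)^k" S "c k"] ms tv Teq MU by auto
  define step where
    "step S k = (SOME t. 0 < t \<and> t \<le> (1/2)^k \<and> d S (S + t *\<^sub>R c k) < (1/2)^k)" for S k
  have step: "0 < step S k" "step S k \<le> (1/2)^k" "d S (S + step S k *\<^sub>R c k) < (1/2)^k" for S k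
    using someI_ex[OF ex[of k S]] unfolding step_def by auto
  define P where "P = rec_nat 0 (\<lambda>k S. S + step S k *\<^sub>R c k)"
  define \<mu> where "\<mu> k = step (P k) k" for k
  have P_Suc: "P (Suc k) = P k + \<mu> k *\<^sub>R c k" for k
    by (simp add: P_def \<mu>_def)
  have P_sum: "P = (\<lambda>n. \<Sum>i<n. \<mu> i *\<^sub>R c i)"
  proof
    show "P n = (\<Sum>i<n. \<mu> i *\<^sub>R c i)" for n
      by (induction n) (simp_all add: P_Suc, simp add: P_def)
  qed
  have "MCauchy P"
  proof (rule MCauchy_if_summable_steps)
    show "d (P k) (P (Suc k)) \<le> (1/2)^k" for k
      using step(3)[of "P k" k] by (simp add: P_Suc \<mu>_def)
  qed (simp_all add: MU)
  then obtain x where "limitin T (\<lambda>n. \<Sum>i<n. \<mu> i *\<^sub>R c i) x sequentially"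
    using mc Teq P_sum unfolding mcomplete_def by blast
  moreover have "summable \<mu>"
    by (rule summable_comparison_test'[where g="\<lambda>k. (1/2)^k"])
      (use step in \<open>auto simp: \<mu>_def less_imp_le\<close>)
  moreover have "\<forall>i. 0 < \<mu> i"
    using step(1) by (simp add: \<mu>_def)
  ultimately show "\<exists>\<mu> x. (\<forall>i. 0 < \<mu> i) \<and> summable \<mu> \<and>
      limitin T (\<lambda>n. \<Sum>i<n. \<mu> i *\<^sub>R c i) x sequentially"
    by (intro exI conjI)
qed

lemma (in Metric_space) second_countable_if_separable:
  assumes "separable_space mtopology"
  shows "second_countable mtopology"
proof -
  obtain E where E: "countable E" "E \<subseteq> M" "mtopology closure_of E = M"
    using assms unfolding separable_space_def by auto
  define \<B> where "\<B> = (\<lambda>(e, k). mball e (1 / Suc k)) ` (E \<times> (UNIV :: nat set))"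
  have "\<exists>V\<in>\<B>. x \<in> V \<and> V \<subseteq> U" if U: "openin mtopology U" "x \<in> U" for U x
  proof -
    obtain r where r: "r > 0" "mball x r \<subseteq> U" and xM: "x \<in> M"
      using U unfolding openin_mtopology by blast
    obtain k :: nat where k: "1 / real (Suc k) < r / 2"
      using reals_Archimedean[of "r/2"] r(1) by (auto simp: inverse_eq_divide)
    have "x \<in> mtopology closure_of E" "x \<in> mball x (1 / Suc k)" using E xM by simp_all
    then obtain e where e: "e \<in> E" "e \<in> mball x (1 / Suc k)"
      using openin_mball[of x "1 / Suc k"] unfolding closure_of_def by blast
    have "mball e (1 / Suc k) \<in> \<B>" using e(1) unfolding \<B>_def by force
    moreover have "x \<in> mball e (1 / Suc k)" using e E xM commute by auto
    moreover have "mball e (1 / Suc k) \<subseteq> mball x r"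
    proof
      fix y assume y: "y \<in> mball e (1 / Suc k)"
      have "d x y \<le> d x e + d e y" using triangle e(2) y by auto
      moreover have "d x e < 1 / Suc k" "d e y < 1 / Suc k" using e(2) y by auto
      ultimately show "y \<in> mball x r" using k xM y by auto
    qed
    ultimately show ?thesis using r(2) by blast
  qed
  moreover have "countable \<B>" using E(1) by (simp add: \<B>_def)
  moreover have "openin mtopology V" if "V \<in> \<B>" for V
    using that by (auto simp: \<B>_def)
  ultimately show ?thesis
    unfolding second_countable_def by blast
qed

lemma metrizable_separable_imp_second_countable:
  assumes "metrizable_space X" "separable_space X"
  shows "second_countable X"
  using assms Metric_space.second_countable_if_separable unfolding metrizable_space_def by metis

lemma second_countable_countable_dense_subset:
  assumes "second_countable X"
  obtains D where "countable D" "D \<subseteq> S" "S \<inter> topspace X \<subseteq> X closure_of D"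
proof -
  have "separable_space (subtopology X S)"
    by (intro second_countable_imp_separable_space second_countable_subtopology assms)
  then obtain D where "countable D" "D \<subseteq> topspace X \<inter> S"
    "subtopology X S closure_of D = topspace X \<inter> S"
    unfolding separable_space_def by auto
  then show ?thesis
    using that closure_of_subtopology_subset[of X S D] by blast
qed

section \<open>Duals of separable normed spaces\<close>

lemma weak_star_eq_strong_operator_topology:
  "(weak_star :: ('y::real_normed_vector \<Rightarrow>\<^sub>L real) topology) = strong_operator_topology"
  unfolding weak_star_def strong_operator_topology_def euclidean_product_topology ..

lemma strong_operator_topology_continuous_affine:
  "continuous_map strong_operator_topology strong_operator_topology (\<lambda>f. a *\<^sub>R f + g)"
  unfolding continuous_on_strong_operator_topo_iff_coordinatewise
proof
  fix z
  have "continuous_map strong_operator_topology euclidean (\<lambda>f. blinfun_apply f (a *\<^sub>R z) + blinfun_apply g z)"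
    by (intro continuous_intros strong_operator_topology_continuous_evaluation) auto
  then show "continuous_map strong_operator_topology euclidean (\<lambda>f. blinfun_apply (a *\<^sub>R f + g) z)"
    by (simp add: blinfun.add_left blinfun.scaleR_left blinfun.scaleR_right)
qed

lemma strong_operator_topology_has_convergent_positive_series:
  "has_convergent_positive_series
     (strong_operator_topology :: ('a::real_normed_vector \<Rightarrow>\<^sub>L 'b::banach) topology)"
  unfolding has_convergent_positive_series_def
proof
  fix c :: "nat \<Rightarrow> 'a \<Rightarrow>\<^sub>L 'b"
  define \<mu> where "\<mu> i = (1/2)^i / (1 + norm (c i))" for i
  have \<mu>_pos: "0 < \<mu> i" for i by (simp add: \<mu>_def add_pos_nonneg)
  have norm_term: "norm (\<mu> i *\<^sub>R c i) \<le> (1/2)^i" for i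
  proof -
    have "norm (\<mu> i *\<^sub>R c i) = (1/2)^i * (norm (c i) / (1 + norm (c i)))"
      by (simp add: \<mu>_def add_nonneg_nonneg)
    also have "\<dots> \<le> (1/2)^i"
      by (rule mult_left_le) (simp_all add: add_pos_nonneg pos_divide_le_eq)
    finally show ?thesis .
  qed
  have "summable (\<lambda>i. \<mu> i *\<^sub>R c i)"
    by (rule summable_norm_cancel, rule summable_comparison_test'[where g="\<lambda>i. (1/2)^i"])
      (use norm_term in auto)
  then have "limitin euclidean (\<lambda>n. \<Sum>i<n. \<mu> i *\<^sub>R c i) (\<Sum>i. \<mu> i *\<^sub>R c i) sequentially"
    using summable_LIMSEQ by simp
  from continuous_map_limit[OF strong_operator_topology_weaker_than_euclidean this]
  have "limitin strong_operator_topology (\<lambda>n. \<Sum>i<n. \<mu> i *\<^sub>R c i) (\<Sum>i. \<mu> i *\<^sub>R c i) sequentially"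
    by (simp add: o_def)
  moreover have "summable \<mu>"
  proof (rule summable_comparison_test'[where g="\<lambda>i. (1/2)^i"])
    fix i
    have "(1/2::real)^i \<le> (1/2)^i * (1 + norm (c i))" by (simp add: mult_le_cancel_left1)
    then show "norm (\<mu> i) \<le> (1/2)^i"
      using \<mu>_pos[of i] by (simp add: \<mu>_def pos_divide_le_eq add_pos_nonneg)
  qed simp
  ultimately show "\<exists>\<mu> x. (\<forall>i. 0 < \<mu> i) \<and> summable \<mu> \<and>
      limitin strong_operator_topology (\<lambda>n. \<Sum>i<n. \<mu> i *\<^sub>R c i) x sequentially"
    using \<mu>_pos by blast
qed

lemma strong_operator_topology_open_contains_box:
  fixes g :: "'a::real_normed_vector \<Rightarrow>\<^sub>L 'b::real_normed_vector"
  assumes "openin strong_operator_topology U" "g \<in> U"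
  obtains Z \<epsilon> where "finite Z" "\<epsilon> > 0"
    "\<And>f :: 'a \<Rightarrow>\<^sub>L 'b. \<forall>z\<in>Z. dist (blinfun_apply f z) (blinfun_apply g z) < \<epsilon> \<Longrightarrow> f \<in> U"
proof -
  obtain V where V: "open V" "U = blinfun_apply -` V"
    using assms(1) unfolding strong_operator_topology_def openin_pullback_topology by auto
  have "openin (product_topology (\<lambda>_. euclidean) UNIV) V"
    using V(1) by (simp add: euclidean_product_topology)
  from product_topology_open_contains_basis[OF this, of "blinfun_apply g"] assms(2) V(2)
  obtain X where X: "blinfun_apply g \<in> (\<Pi>\<^sub>E i\<in>UNIV. X i)" "\<And>i. open (X i)"
    "finite {i. X i \<noteq> UNIV}" "(\<Pi>\<^sub>E i\<in>UNIV. X i) \<subseteq> V"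
    by auto
  define Z where "Z = {i. X i \<noteq> UNIV}"
  have "\<exists>\<delta>>0. ball (g z) \<delta> \<subseteq> X z" for z
  proof -
    have "g z \<in> X z" using X(1) by (simp add: PiE_iff)
    then show ?thesis using X(2)[of z] open_contains_ball by blast
  qed
  then obtain \<delta> where \<delta>: "\<And>z. \<delta> z > 0" "\<And>z. ball (g z) (\<delta> z) \<subseteq> X z" by metis
  show ?thesis
  proof
    show "finite Z" using X(3) by (simp add: Z_def)
    then show "Min (insert 1 (\<delta> ` Z)) > 0" using \<delta>(1) by simp
    fix f :: "'a \<Rightarrow>\<^sub>L 'b"
    assume f: "\<forall>z\<in>Z. dist (f z) (g z) < Min (insert 1 (\<delta> ` Z))"
    have "f z \<in> X z" for z
    proof (cases "z \<in> Z")
      case True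
      then have "dist (g z) (f z) < \<delta> z"
        using f \<open>finite Z\<close> by (simp add: dist_commute)
      then have "f z \<in> ball (g z) (\<delta> z)" by simp
      then show ?thesis using \<delta>(2) by blast
    qed (simp add: Z_def)
    then show "f \<in> U" using X(4) V(2) by (auto simp: PiE_iff)
  qed
qed

lemma strong_operator_topology_closure_of_bounded:
  fixes g :: "'a::real_normed_vector \<Rightarrow>\<^sub>L 'b::real_normed_vector" and e :: "nat \<Rightarrow> 'a"
  assumes e: "closure (range e) = UNIV" and g: "norm g \<le> m" and D: "\<And>f. f \<in> D \<Longrightarrow> norm f \<le> m"
    and close: "(\<lambda>j. blinfun_apply g (e j)) \<in> closure ((\<lambda>f j. blinfun_apply f (e j)) ` D)"
  shows "g \<in> strong_operator_topology closure_of D"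
  unfolding closure_of_def
proof (safe)
  show "g \<in> topspace strong_operator_topology" by (simp add: strong_operator_topology_topspace)
  fix U assume "g \<in> U" "openin strong_operator_topology U"
  then obtain Z \<epsilon> where Z: "finite Z" "\<epsilon> > 0"
    "\<And>f :: 'a \<Rightarrow>\<^sub>L 'b. \<forall>z\<in>Z. dist (blinfun_apply f z) (blinfun_apply g z) < \<epsilon> \<Longrightarrow> f \<in> U"
    using strong_operator_topology_open_contains_box by metis
  have "0 \<le> m" using g norm_ge_zero order_trans by blast
  define r where "r = \<epsilon> / (3 * (m + 1))"
  have "r > 0" using Z(2) \<open>0 \<le> m\<close> by (simp add: r_def)
  have "m * r < \<epsilon> / 3" using Z(2) \<open>0 \<le> m\<close> by (simp add: r_def field_simps)
  have "\<exists>j. dist (e j) z < r" for z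
    using closure_approachable[of z "range e"] e \<open>r > 0\<close> by auto
  then obtain k where k: "\<And>z. dist (e (k z)) z < r" by metis
  define W where "W = {h :: nat \<Rightarrow> 'b. \<forall>z\<in>Z. h (k z) \<in> ball (g (e (k z))) (\<epsilon>/3)}"
  have "open W" unfolding W_def
    by (rule product_topology_basis') (use Z(1) in auto)
  moreover have "(\<lambda>j. g (e j)) \<in> W" using Z(2) by (simp add: W_def)
  ultimately obtain f where f: "f \<in> D" "(\<lambda>j. f (e j)) \<in> W"
    using close open_Int_closure_eq_empty by blast
  have near: "dist (h z) (h (e (k z))) < \<epsilon> / 3" if "norm h \<le> m" for h :: "'a \<Rightarrow>\<^sub>L 'b" and z
  proof -
    have "dist (h z) (h (e (k z))) = norm (h (z - e (k z)))"
      by (simp add: dist_norm blinfun.diff_right)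
    also have "\<dots> \<le> norm h * norm (z - e (k z))" by (rule norm_blinfun)
    also have "\<dots> \<le> m * r"
      using that k[of z] \<open>0 \<le> m\<close> by (intro mult_mono) (auto simp: dist_norm norm_minus_commute)
    finally show ?thesis using \<open>m * r < \<epsilon> / 3\<close> by linarith
  qed
  have "dist (f z) (g z) < \<epsilon>" if "z \<in> Z" for z
  proof -
    have "dist (f (e (k z))) (g (e (k z))) < \<epsilon> / 3"
      using f(2) that by (simp add: W_def dist_commute)
    then show ?thesis
      using dist_triangle_third near[OF D[OF f(1)], of z] near[OF g, of z]
      by (metis dist_commute)
  qed
  then show "\<exists>f\<in>D. f \<in> U" using Z(3) f(1) by blast
qed

lemma strong_operator_topology_countable_dense_subset:
  fixes C :: "('a::real_normed_vector \<Rightarrow>\<^sub>L 'b::{real_normed_vector, second_countable_topology}) set"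
  assumes "separable_space (euclidean :: 'a topology)"
  obtains D where "countable D" "D \<subseteq> C" "C \<subseteq> strong_operator_topology closure_of D"
proof -
  obtain E :: "'a set" where E: "countable E" "closure E = UNIV"
    using assms unfolding separable_space_def by auto
  then have "E \<noteq> {}" by auto
  define e where "e = from_nat_into E"
  have e: "closure (range e) = UNIV" using E \<open>E \<noteq> {}\<close> by (simp add: e_def)
  define \<phi> where "\<phi> f = (\<lambda>j. blinfun_apply f (e j))" for f :: "'a \<Rightarrow>\<^sub>L 'b"
  define C\<^sub>m where "C\<^sub>m m = C \<inter> {f. norm f \<le> real m}" for m :: nat
  have "\<exists>D. countable D \<and> D \<subseteq> C\<^sub>m m \<and> \<phi> ` C\<^sub>m m \<subseteq> closure (\<phi> ` D)" for m
  proof -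
    obtain S where S: "countable S" "S \<subseteq> \<phi> ` C\<^sub>m m" "\<phi> ` C\<^sub>m m \<subseteq> closure S"
      using separable[of "\<phi> ` C\<^sub>m m"] by blast
    have "\<phi> ` (inv_into (C\<^sub>m m) \<phi> ` S) = S"
      using S(2) by (simp add: image_image subset_eq f_inv_into_f cong: image_cong)
    moreover have "inv_into (C\<^sub>m m) \<phi> ` S \<subseteq> C\<^sub>m m"
      using S(2) by (auto intro: inv_into_into)
    ultimately show ?thesis using S by (metis countable_image)
  qed
  then obtain D where D: "\<And>m. countable (D m)" "\<And>m. D m \<subseteq> C\<^sub>m m"
      "\<And>m. \<phi> ` C\<^sub>m m \<subseteq> closure (\<phi> ` D m)"
    by metis
  show ?thesis
  proof
    show "countable (\<Union>m. D m)" using D(1) by simp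
    show "(\<Union>m. D m) \<subseteq> C" using D(2) by (auto simp: C\<^sub>m_def)
    show "C \<subseteq> strong_operator_topology closure_of (\<Union>m. D m)"
    proof
      fix g assume "g \<in> C"
      then have g: "g \<in> C\<^sub>m (nat \<lceil>norm g\<rceil>)" by (simp add: C\<^sub>m_def real_nat_ceiling_ge)
      have "g \<in> strong_operator_topology closure_of D (nat \<lceil>norm g\<rceil>)"
      proof (rule strong_operator_topology_closure_of_bounded[OF e])
        show "norm g \<le> real (nat \<lceil>norm g\<rceil>)" using g by (simp add: C\<^sub>m_def)
        show "norm f \<le> real (nat \<lceil>norm g\<rceil>)" if "f \<in> D (nat \<lceil>norm g\<rceil>)" for f
          using D(2)[of "nat \<lceil>norm g\<rceil>"] that unfolding C\<^sub>m_def by blast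
        show "(\<lambda>j. blinfun_apply g (e j)) \<in> closure ((\<lambda>f j. blinfun_apply f (e j)) ` D (nat \<lceil>norm g\<rceil>))"
          using D(3) g unfolding \<phi>_def by blast
      qed
      then show "g \<in> strong_operator_topology closure_of (\<Union>m. D m)"
        using closure_of_mono[of "D (nat \<lceil>norm g\<rceil>)" "\<Union>m. D m"] by blast
    qed
  qed
qed

theorem theorem3p2:
  shows "(\<forall>(T :: 'a::real_vector topology) (C :: 'a set).
            tvs T \<and> separable_space T \<and> completely_metrizable_space T \<and>
            C \<noteq> {} \<and> cs_closed T C \<longrightarrow> fri T C \<noteq> {})
       \<and> (\<forall>C :: ('y::real_normed_vector \<Rightarrow>\<^sub>L real) set.
            separable_space (euclidean :: 'y topology) \<and>
            C \<noteq> {} \<and> cs_closed weak_star C \<longrightarrow> fri weak_star C \<noteq> {})"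
proof (intro conjI allI impI)
  fix T :: "'a topology" and C :: "'a set"
  assume "tvs T \<and> separable_space T \<and> completely_metrizable_space T \<and> C \<noteq> {} \<and> cs_closed T C"
  then have tv: "tvs T" and sep: "separable_space T" and cm: "completely_metrizable_space T"
    and "C \<noteq> {}" and cs: "cs_closed T C"
    by simp_all
  have "second_countable T"
    using metrizable_separable_imp_second_countable completely_metrizable_imp_metrizable_space cm sep
    by blast
  then obtain D where D: "countable D" "D \<subseteq> C" "C \<inter> topspace T \<subseteq> T closure_of D"
    by (rule second_countable_countable_dense_subset)
  have "topspace T = UNIV" using tv by (simp add: tvs_def)
  then show "fri T C \<noteq> {}"
    using fri_nonempty_if_countable_dense[OF cs tvs_continuous_affine[OF tv]
        completely_metrizable_tvs_has_convergent_positive_series[OF tv cm] \<open>C \<noteq> {}\<close> D(1,2)] D(3)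
    by simp
next
  fix C :: "('y \<Rightarrow>\<^sub>L real) set"
  assume "separable_space (euclidean :: 'y topology) \<and> C \<noteq> {} \<and> cs_closed weak_star C"
  then have sep: "separable_space (euclidean :: 'y topology)" and "C \<noteq> {}"
    and cs: "cs_closed strong_operator_topology C"
    by (simp_all add: weak_star_eq_strong_operator_topology)
  obtain D where "countable D" "D \<subseteq> C" "C \<subseteq> strong_operator_topology closure_of D"
    using strong_operator_topology_countable_dense_subset[OF sep] by blast
  then show "fri weak_star C \<noteq> {}"
    unfolding weak_star_eq_strong_operator_topology
    by (intro fri_nonempty_if_countable_dense[OF cs strong_operator_topology_continuous_affine
          strong_operator_topology_has_convergent_positive_series \<open>C \<noteq> {}\<close>])
qed

end
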